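(* Let $M$ be a finite-dimensional von Neumann algebra and let $D:M\to M$ be an additive derivation. Then $D$ can be uniquely represented as $D=D_a+D_\delta$, where $D_a(x)=ax-xa$ is the inner derivation implemented by some $a\in M$, and $D_\delta$ is the additive derivation defined below from the restriction $\delta$ of $D$ to the center $Z(M)$.
   Context: An additive derivation on a complex algebra $\mathcal A$ is an additive map $D:\mathcal A\to\mathcal A$ with $D(xy)=D(x)y+xD(y)$ for all $x,y$; such a $D$ maps the center $Z(\mathcal A)$ into itself. Construction of $D_\delta$: write $M$ via mutually orthogonal minimal central projections $z_1,\dots,z_k$ with $\sum_i z_i=\mathbf 1$ and $z_iM\cong M_{n_i}(\mathbb C)$. Let $\delta=D|_{Z(M)}$; since $\delta(zx)=z\delta(x)$ for central projections $z$, $\delta$ maps each $z_iZ(M)\cong\mathbb C$ into itself and thus induces an additive derivation $\delta_i:\mathbb C\to\mathbb C$. Fixing matrix units $e^{(i)}_{jl}$ ($1\le j,l\le n_i$) of $z_iM$, every $x\in M$ is uniquely $x=\sum_i\sum_{j,l}\lambda^{(i)}_{jl}e^{(i)}_{jl}$ with $\lambda^{(i)}_{jl}\in\mathbb C$, and $D_\delta(x)=\sum_i\sum_{j,l}\delta_i(\lambda^{(i)}_{jl})e^{(i)}_{jl}$. This $D_\delta$ is an additive derivation on $M$ whose restriction to $Z(M)$ is $\delta$. *)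

theory Defs
  imports Complex_Main
begin

text \<open>Concrete model of a finite-dimensional von Neumann algebra
  M = M_{n_0}(C) (+) ... (+) M_{n_{k-1}}(C).  An element is a function
  x i j l = (j,l)-entry of the i-th block, vanishing outside the blocks.\<close>

type_synonym fdvn = "nat \<Rightarrow> nat \<Rightarrow> nat \<Rightarrow> complex"

definition vna :: "nat \<Rightarrow> (nat \<Rightarrow> nat) \<Rightarrow> fdvn set" where
  "vna k n = {x. \<forall>i j l. \<not> (i < k \<and> j < n i \<and> l < n i) \<longrightarrow> x i j l = 0}"

definition vadd :: "fdvn \<Rightarrow> fdvn \<Rightarrow> fdvn" where
  "vadd x y = (\<lambda>i j l. x i j l + y i j l)"

definition vmult :: "(nat \<Rightarrow> nat) \<Rightarrow> fdvn \<Rightarrow> fdvn \<Rightarrow> fdvn" where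
  "vmult n x y = (\<lambda>i j l. \<Sum>m<n i. x i j m * y i m l)"

definition vscal :: "complex \<Rightarrow> fdvn \<Rightarrow> fdvn" where
  "vscal c x = (\<lambda>i j l. c * x i j l)"

definition cproj :: "(nat \<Rightarrow> nat) \<Rightarrow> nat \<Rightarrow> fdvn" where
  "cproj n i0 = (\<lambda>i j l. if i = i0 \<and> j = l \<and> j < n i then 1 else 0)"

definition inner_der :: "(nat \<Rightarrow> nat) \<Rightarrow> fdvn \<Rightarrow> fdvn \<Rightarrow> fdvn" where
  "inner_der n a x = (\<lambda>i j l. vmult n a x i j l - vmult n x a i j l)"

definition is_add_der :: "nat \<Rightarrow> (nat \<Rightarrow> nat) \<Rightarrow> (fdvn \<Rightarrow> fdvn) \<Rightarrow> bool" where
  "is_add_der k n D \<longleftrightarrow>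
     (\<forall>x\<in>vna k n. D x \<in> vna k n) \<and>
     (\<forall>x\<in>vna k n. \<forall>y\<in>vna k n. D (vadd x y) = vadd (D x) (D y)) \<and>
     (\<forall>x\<in>vna k n. \<forall>y\<in>vna k n.
        D (vmult n x y) = vadd (vmult n (D x) y) (vmult n x (D y)))"

definition is_cder :: "(complex \<Rightarrow> complex) \<Rightarrow> bool" where
  "is_cder g \<longleftrightarrow> (\<forall>a b. g (a + b) = g a + g b) \<and> (\<forall>a b. g (a * b) = g a * b + a * g b)"

definition delta_i :: "(nat \<Rightarrow> nat) \<Rightarrow> (fdvn \<Rightarrow> fdvn) \<Rightarrow> nat \<Rightarrow> complex \<Rightarrow> complex" where
  "delta_i n D i c = (THE d. D (vscal c (cproj n i)) = vscal d (cproj n i))"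

definition D_gam :: "nat \<Rightarrow> (nat \<Rightarrow> nat) \<Rightarrow> (nat \<Rightarrow> complex \<Rightarrow> complex) \<Rightarrow> fdvn \<Rightarrow> fdvn" where
  "D_gam k n g x = (\<lambda>i j l. if i < k \<and> j < n i \<and> l < n i then g i (x i j l) else 0)"

definition D_delta :: "nat \<Rightarrow> (nat \<Rightarrow> nat) \<Rightarrow> (fdvn \<Rightarrow> fdvn) \<Rightarrow> fdvn \<Rightarrow> fdvn" where
  "D_delta k n D = D_gam k n (delta_i n D)"

end

theory Submission
  imports Defs
begin

text \<open>The additive derivation D maps the centre into itself, and the centre of each block
  M_{n_i}(C) consists of scalars; hence D(c z_i) = \<delta>_i(c) z_i. Writing x e^(i)_{q0} as the
  combination \<Sum>_m x_{mq} e^(i)_{m0} and applying the Leibniz rule on both sides expresses every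
  entry of D x as \<delta>_i of the corresponding entry of x plus an entry of the commutator [a, x],
  where a collects the first columns of D(e^(i)_{q0}). Uniqueness: inner derivations vanish on
  the centre, so evaluating a decomposition at c z_i recovers \<delta>_i(c), and the inner parts then
  agree by cancellation.\<close>

definition matrix_unit :: "nat \<Rightarrow> nat \<Rightarrow> nat \<Rightarrow> fdvn" where
  "matrix_unit i p q = (\<lambda>i' j l. if i' = i \<and> j = p \<and> l = q then 1 else 0)"

lemma vna_entry_outside: "x \<in> vna k n \<Longrightarrow> \<not> (i < k \<and> j < n i \<and> l < n i) \<Longrightarrow> x i j l = 0"
  by (auto simp: vna_def)

lemma matrix_unit_in_vna: "i < k \<Longrightarrow> p < n i \<Longrightarrow> q < n i \<Longrightarrow> matrix_unit i p q \<in> vna k n"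
  by (auto simp: vna_def matrix_unit_def)

lemma cproj_in_vna: "i < k \<Longrightarrow> cproj n i \<in> vna k n"
  by (auto simp: vna_def cproj_def)

lemma vscal_in_vna: "x \<in> vna k n \<Longrightarrow> vscal c x \<in> vna k n"
  by (auto simp: vna_def vscal_def)

lemma zero_in_vna: "(\<lambda>i j l. 0) \<in> vna k n"
  by (auto simp: vna_def)

lemma sum_in_vna: "\<forall>m<N. f m \<in> vna k n \<Longrightarrow> (\<lambda>i j l. \<Sum>m<N. f m i j l) \<in> vna k n"
  by (auto simp: vna_def)

lemma vadd_right_cancel: "vadd x z = vadd y z \<Longrightarrow> x = y"
  by (auto simp: vadd_def fun_eq_iff)

lemma vscal_one: "vscal 1 x = x"
  by (simp add: vscal_def)

lemma vmult_matrix_unit_right: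
  "q < n i \<Longrightarrow> vmult n x (matrix_unit i q r) i' j l = (if i' = i \<and> l = r then x i j q else 0)"
  by (auto simp: vmult_def matrix_unit_def if_distrib cong: if_cong)

lemma vmult_matrix_unit_left:
  assumes "q < n i"
  shows "vmult n (matrix_unit i p q) y i' j l = (if i' = i \<and> j = p then y i q l else 0)"
proof -
  have "\<And>m. (if i' = i \<and> j = p \<and> m = q then 1 else 0) * y i' m l
     = (if m = q then (if i' = i \<and> j = p then y i q l else 0) else 0)" by auto
  then show ?thesis using assms by (simp add: vmult_def matrix_unit_def)
qed

lemma vmult_scaled_cproj_left:
  "vmult n (vscal c (cproj n i)) y i' j l = (if i' = i \<and> j < n i then c * y i j l else 0)"
proof -
  have "\<And>m. c * (if i' = i \<and> j = m \<and> j < n i' then 1 else 0) * y i' m l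
     = (if m = j then (if i' = i \<and> j < n i then c * y i j l else 0) else 0)" by auto
  note entry = this
  show ?thesis unfolding vmult_def vscal_def cproj_def entry by simp
qed

lemma vmult_scaled_cproj_right:
  "vmult n y (vscal c (cproj n i)) i' j l = (if i' = i \<and> l < n i then c * y i j l else 0)"
proof -
  have "\<And>m. y i' j m * (c * (if i' = i \<and> m = l \<and> m < n i' then 1 else 0))
     = (if m = l then (if i' = i \<and> l < n i then c * y i j l else 0) else 0)" by auto
  note entry = this
  show ?thesis unfolding vmult_def vscal_def cproj_def entry by simp
qed

lemma vmult_cproj_left:
  "vmult n (cproj n i) y i' j l = (if i' = i \<and> j < n i then y i j l else 0)"
  using vmult_scaled_cproj_left[of n 1 i y i' j l] by (simp add: vscal_one)

lemma scaled_cproj_central: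
  assumes "y \<in> vna k n"
  shows "vmult n (vscal c (cproj n i)) y = vmult n y (vscal c (cproj n i))"
  using vna_entry_outside[OF assms]
  by (auto simp: fun_eq_iff vmult_scaled_cproj_left vmult_scaled_cproj_right mult.commute)

lemma inner_der_central:
  "vmult n b w = vmult n w b \<Longrightarrow> inner_der n b w = (\<lambda>i j l. 0)"
  by (simp add: inner_der_def)

lemma central_block_scalar:
  assumes central: "\<forall>y\<in>vna k n. vmult n w y = vmult n y w"
    and i: "i < k" "0 < n i" and pq: "p < n i" "q < n i"
  shows "w i p q = (if p = q then w i 0 0 else 0)"
proof -
  have "vmult n w (matrix_unit i q 0) i p 0 = vmult n (matrix_unit i q 0) w i p 0"
    using central matrix_unit_in_vna[of i k q n 0] i pq by simp
  then show ?thesis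
    using pq i(2) by (simp add: vmult_matrix_unit_right vmult_matrix_unit_left)
qed

lemma D_gam_scaled_cproj:
  "i < k \<Longrightarrow> 0 < n i \<Longrightarrow> D_gam k n g (vscal c (cproj n i)) i 0 0 = g i c"
  by (simp add: D_gam_def vscal_def cproj_def)

lemma decomposition_coefficient:
  assumes b: "b \<in> vna k n"
    and decomp: "\<forall>x\<in>vna k n. D x = vadd (inner_der n b x) (D_gam k n g x)"
    and i: "i < k" "0 < n i"
  shows "g i c = D (vscal c (cproj n i)) i 0 0"
proof -
  let ?w = "vscal c (cproj n i)"
  have "inner_der n b ?w = (\<lambda>i j l. 0)"
    using scaled_cproj_central[OF b] by (intro inner_der_central) simp
  then show ?thesis
    using decomp vscal_in_vna[OF cproj_in_vna[OF i(1)]] D_gam_scaled_cproj[of i k n g c] i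
    by (simp add: vadd_def)
qed

locale add_derivation =
  fixes k :: nat and n :: "nat \<Rightarrow> nat" and D :: "fdvn \<Rightarrow> fdvn"
  assumes add_der: "is_add_der k n D"
begin

lemma D_in_vna: "x \<in> vna k n \<Longrightarrow> D x \<in> vna k n"
  using add_der by (simp add: is_add_der_def)

lemma D_vadd: "x \<in> vna k n \<Longrightarrow> y \<in> vna k n \<Longrightarrow> D (vadd x y) = vadd (D x) (D y)"
  using add_der by (simp add: is_add_der_def)

lemma D_vmult: "x \<in> vna k n \<Longrightarrow> y \<in> vna k n \<Longrightarrow>
   D (vmult n x y) = vadd (vmult n (D x) y) (vmult n x (D y))"
  using add_der by (simp add: is_add_der_def)

lemma D_zero: "D (\<lambda>i j l. 0) = (\<lambda>i j l. 0)"
proof -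
  have "vadd (\<lambda>i j l. 0) (\<lambda>i j l. 0) = (\<lambda>i j l. 0 :: complex)" by (simp add: vadd_def)
  then have "D (\<lambda>i j l. 0) = vadd (D (\<lambda>i j l. 0)) (D (\<lambda>i j l. 0))"
    using D_vadd[OF zero_in_vna zero_in_vna] by simp
  then show ?thesis by (simp add: vadd_def fun_eq_iff)
qed

lemma D_sum:
  "\<forall>m<(N::nat). f m \<in> vna k n \<Longrightarrow> D (\<lambda>i j l. \<Sum>m<N. f m i j l) = (\<lambda>i j l. \<Sum>m<N. D (f m) i j l)"
proof (induction N)
  case 0
  then show ?case using D_zero by simp
next
  case (Suc N)
  have "(\<lambda>i j l. \<Sum>m<Suc N. f m i j l) = vadd (\<lambda>i j l. \<Sum>m<N. f m i j l) (f N)"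
    by (simp add: vadd_def)
  moreover have "D (vadd (\<lambda>i j l. \<Sum>m<N. f m i j l) (f N))
      = vadd (D (\<lambda>i j l. \<Sum>m<N. f m i j l)) (D (f N))"
    using Suc.prems sum_in_vna[of N f] by (intro D_vadd) auto
  ultimately show ?case using Suc by (simp add: vadd_def)
qed

lemma D_central:
  assumes w: "w \<in> vna k n" and central: "\<forall>y\<in>vna k n. vmult n w y = vmult n y w"
  shows "\<forall>y\<in>vna k n. vmult n (D w) y = vmult n y (D w)"
proof
  fix y assume y: "y \<in> vna k n"
  have "vadd (vmult n (D w) y) (vmult n w (D y)) = D (vmult n w y)"
    by (simp add: D_vmult[OF w y])
  also have "\<dots> = vadd (vmult n (D y) w) (vmult n y (D w))"
    using central y D_vmult[OF y w] by simp
  also have "\<dots> = vadd (vmult n y (D w)) (vmult n w (D y))"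
    using central D_in_vna[OF y] by (simp add: vadd_def add.commute)
  finally show "vmult n (D w) y = vmult n y (D w)"
    by (rule vadd_right_cancel)
qed

lemma D_scaled_cproj_outside_block:
  assumes i: "i < k" and "i' \<noteq> i"
  shows "D (vscal c (cproj n i)) i' j l = 0"
proof -
  let ?w = "vscal c (cproj n i)"
  have w: "?w \<in> vna k n" by (intro vscal_in_vna cproj_in_vna i)
  have "vmult n (cproj n i) ?w = ?w"
    unfolding fun_eq_iff vmult_cproj_left
    using vna_entry_outside[OF w] by (auto simp: vscal_def cproj_def)
  then have "D ?w i' j l = vadd (vmult n (D (cproj n i)) ?w) (vmult n (cproj n i) (D ?w)) i' j l"
    using D_vmult[OF cproj_in_vna[OF i] w] by metis
  then have "D ?w i' j l = vmult n (D (cproj n i)) ?w i' j l"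
    using \<open>i' \<noteq> i\<close> by (simp add: vadd_def vmult_cproj_left)
  then show ?thesis
    using \<open>i' \<noteq> i\<close> by (simp add: vmult_def vscal_def cproj_def)
qed

lemma D_scaled_cproj_is_scalar:
  assumes i: "i < k" "0 < n i"
  shows "D (vscal c (cproj n i)) = vscal (D (vscal c (cproj n i)) i 0 0) (cproj n i)"
proof -
  let ?W = "D (vscal c (cproj n i))"
  have w: "vscal c (cproj n i) \<in> vna k n" by (intro vscal_in_vna cproj_in_vna i)
  have central: "\<forall>y\<in>vna k n. vmult n ?W y = vmult n y ?W"
    using D_central[OF w] scaled_cproj_central by blast
  show ?thesis
  proof (intro ext)
    fix i' j l
    show "?W i' j l = vscal (?W i 0 0) (cproj n i) i' j l"
    proof (cases "i' = i \<and> j < n i \<and> l < n i")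
      case True
      then show ?thesis
        using central_block_scalar[OF central i, of j l] by (simp add: vscal_def cproj_def)
    next
      case False
      have "?W i' j l = 0"
      proof (cases "i' = i")
        case True
        with False i(1) show ?thesis by (intro vna_entry_outside[OF D_in_vna[OF w]]) auto
      next
        case False
        then show ?thesis by (rule D_scaled_cproj_outside_block[OF i(1)])
      qed
      with False show ?thesis by (auto simp: vscal_def cproj_def)
    qed
  qed
qed

lemma D_scaled_cproj:
  assumes i: "i < k" "0 < n i"
  shows "D (vscal c (cproj n i)) = vscal (delta_i n D i c) (cproj n i)"
proof -
  let ?d = "D (vscal c (cproj n i)) i 0 0"
  have "delta_i n D i c = ?d"
    unfolding delta_i_def
  proof (rule the_equality)
    show "D (vscal c (cproj n i)) = vscal ?d (cproj n i)"
      by (rule D_scaled_cproj_is_scalar[OF i])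
  next
    fix d assume "D (vscal c (cproj n i)) = vscal d (cproj n i)"
    then show "d = ?d" using i(2) by (simp add: vscal_def cproj_def)
  qed
  then show ?thesis using D_scaled_cproj_is_scalar[OF i] by simp
qed

lemma D_scaled_matrix_unit:
  assumes i: "i < k" "0 < n i" and mp: "m < n i" "p < n i"
  shows "D (vscal c (matrix_unit i m 0)) i p 0
         = (if p = m then delta_i n D i c else 0) + c * D (matrix_unit i m 0) i p 0"
proof -
  let ?e = "matrix_unit i m 0"
  have e: "?e \<in> vna k n" using i(1) mp(1) i(2) by (rule matrix_unit_in_vna)
  have w: "vscal c (cproj n i) \<in> vna k n" by (intro vscal_in_vna cproj_in_vna i)
  have "vscal c ?e = vmult n (vscal c (cproj n i)) ?e"
    unfolding fun_eq_iff vmult_scaled_cproj_left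
    using mp(1) by (auto simp: vscal_def matrix_unit_def)
  then have "D (vscal c ?e) = vadd (vmult n (vscal (delta_i n D i c) (cproj n i)) ?e)
       (vmult n (vscal c (cproj n i)) (D ?e))"
    by (simp add: D_vmult[OF w e] D_scaled_cproj[OF i])
  then show ?thesis
    using mp(2) by (simp add: vadd_def vmult_scaled_cproj_left matrix_unit_def)
qed

lemma D_entry:
  assumes x: "x \<in> vna k n" and i: "i < k" "0 < n i" and pq: "p < n i" "q < n i"
  shows "D x i p q = delta_i n D i (x i p q)
     + ((\<Sum>m<n i. D (matrix_unit i m 0) i p 0 * x i m q)
        - (\<Sum>m<n i. x i p m * D (matrix_unit i q 0) i m 0))"
proof -
  let ?y = "vmult n x (matrix_unit i q 0)"
  let ?f = "\<lambda>m. vscal (x i m q) (matrix_unit i m 0)"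
  have f: "\<forall>m<n i. ?f m \<in> vna k n"
    using i by (auto intro!: vscal_in_vna matrix_unit_in_vna)
  have "?y = (\<lambda>i' j l. \<Sum>m<n i. ?f m i' j l)"
  proof (intro ext)
    fix i' j l
    have "\<And>m. ?f m i' j l = (if m = j then (if i' = i \<and> l = 0 then x i j q else 0) else 0)"
      by (auto simp: vscal_def matrix_unit_def)
    then show "?y i' j l = (\<Sum>m<n i. ?f m i' j l)"
      using pq(2) vna_entry_outside[OF x, of i j q] by (auto simp: vmult_matrix_unit_right)
  qed
  then have "D ?y i p 0 = (\<Sum>m<n i. D (?f m) i p 0)"
    by (simp add: D_sum[OF f])
  also have "\<dots> = (\<Sum>m<n i. (if p = m then delta_i n D i (x i m q) else 0)
        + x i m q * D (matrix_unit i m 0) i p 0)"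
    using D_scaled_matrix_unit[OF i _ pq(1)] by (intro sum.cong) auto
  also have "\<dots> = delta_i n D i (x i p q) + (\<Sum>m<n i. x i m q * D (matrix_unit i m 0) i p 0)"
    using pq(1) by (simp add: sum.distrib)
  finally have column: "D ?y i p 0 = \<dots>" .
  have "D ?y = vadd (vmult n (D x) (matrix_unit i q 0)) (vmult n x (D (matrix_unit i q 0)))"
    using D_vmult[OF x matrix_unit_in_vna[of i k q n 0]] i pq(2) by simp
  moreover have "vmult n (D x) (matrix_unit i q 0) i p 0 = D x i p q"
    using pq(2) by (simp add: vmult_matrix_unit_right)
  ultimately have "D ?y i p 0 = D x i p q + (\<Sum>m<n i. x i p m * D (matrix_unit i q 0) i m 0)"
    by (simp add: vadd_def vmult_def)
  with column show ?thesis by (simp add: algebra_simps)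
qed

text \<open>Since D(e_{q0})_{p0} = (a e_{q0} - e_{q0} a)_{p0} = a_{pq} - [p = q] a_{00}, the first columns
  of the D(e_{q0}) determine a up to a central summand; this choice has a_{00} = 0 in each block.\<close>
definition implementing_element :: fdvn where
  "implementing_element = (\<lambda>i p q. if i < k \<and> p < n i \<and> q < n i
     then D (matrix_unit i q 0) i p 0 else 0)"

lemma implementing_element_in_vna: "implementing_element \<in> vna k n"
  by (auto simp: implementing_element_def vna_def)

lemma decomposition:
  assumes pos: "\<forall>i<k. 0 < n i" and x: "x \<in> vna k n"
  shows "D x = vadd (inner_der n implementing_element x) (D_delta k n D x)"
proof (intro ext)
  fix i p q
  let ?a = implementing_element
  show "D x i p q = vadd (inner_der n ?a x) (D_delta k n D x) i p q"
  proof (cases "i < k \<and> p < n i \<and> q < n i")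
    case True
    then have i: "i < k" "0 < n i" and pq: "p < n i" "q < n i" using pos by auto
    have "(\<Sum>m<n i. ?a i p m * x i m q) = (\<Sum>m<n i. D (matrix_unit i m 0) i p 0 * x i m q)"
      "(\<Sum>m<n i. x i p m * ?a i m q) = (\<Sum>m<n i. x i p m * D (matrix_unit i q 0) i m 0)"
      using i pq by (auto intro!: sum.cong simp: implementing_element_def)
    then show ?thesis
      using True D_entry[OF x i pq]
      by (simp add: vadd_def inner_der_def vmult_def D_delta_def D_gam_def)
  next
    case False
    then have "vmult n ?a x i p q = 0" "vmult n x ?a i p q = 0"
      using vna_entry_outside[OF implementing_element_in_vna] vna_entry_outside[OF x]
      by (auto simp: vmult_def intro!: sum.neutral)
    moreover have "D_delta k n D x i p q = 0"
      unfolding D_delta_def D_gam_def using False by (simp only: if_False)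
    ultimately show ?thesis
      using vna_entry_outside[OF D_in_vna[OF x] False]
      by (simp add: vadd_def inner_der_def)
  qed
qed

lemma decomposition_unique:
  assumes pos: "\<forall>i<k. 0 < n i" and b: "b \<in> vna k n"
    and decomp: "\<forall>x\<in>vna k n. D x = vadd (inner_der n b x) (D_gam k n g x)"
  shows "(\<forall>i<k. g i = delta_i n D i)
    \<and> (\<forall>x\<in>vna k n. inner_der n b x = inner_der n implementing_element x)"
proof -
  have g: "g i = delta_i n D i" if "i < k" for i
  proof
    fix c
    have i: "i < k" "0 < n i" using pos that by auto
    show "g i c = delta_i n D i c"
      using decomposition_coefficient[OF b decomp i, of c] i(2)
      unfolding D_scaled_cproj[OF i] by (simp add: vscal_def cproj_def)
  qed
  then have gam: "D_gam k n g = D_delta k n D"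
    by (auto simp: fun_eq_iff D_delta_def D_gam_def)
  have "inner_der n b x = inner_der n implementing_element x" if x: "x \<in> vna k n" for x
  proof (rule vadd_right_cancel)
    show "vadd (inner_der n b x) (D_delta k n D x)
        = vadd (inner_der n implementing_element x) (D_delta k n D x)"
      using decomp x gam decomposition[OF pos x] by simp
  qed
  with g show ?thesis by blast
qed

end

theorem lemma3p1:
  fixes k :: nat and n :: "nat \<Rightarrow> nat" and D :: "fdvn \<Rightarrow> fdvn"
  assumes "\<forall>i<k. 0 < n i"
    and "is_add_der k n D"
  shows "\<exists>a\<in>vna k n.
           (\<forall>x\<in>vna k n. D x = vadd (inner_der n a x) (D_delta k n D x)) \<and>
           (\<forall>b\<in>vna k n. \<forall>g. (\<forall>i<k. is_cder (g i)) \<and>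
               (\<forall>x\<in>vna k n. D x = vadd (inner_der n b x) (D_gam k n g x))
             \<longrightarrow> (\<forall>i<k. g i = delta_i n D i) \<and>
                 (\<forall>x\<in>vna k n. inner_der n b x = inner_der n a x))"
proof -
  interpret add_derivation k n D by unfold_locales (rule assms(2))
  show ?thesis
    using implementing_element_in_vna decomposition[OF assms(1)]
      decomposition_unique[OF assms(1)] by blast
qed

end
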